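(* Assume that for all real $z\ge 1$ one has $\bigl|\sum_{n\le z}\mu(n)^2 - \tfrac{6}{\pi^2}z\bigr|\le 0.68\sqrt z$. Then for all real $z\geq 1$, \[ \Biggl|\sum_{n\leq z} \frac{\mu(n)^2}{n} - \frac{\log z}{\zeta(2)} - A\Biggr| \leq \frac{2.04}{\sqrt{z}}, \qquad\text{where } A=\frac{\gamma}{\zeta(2)}-2\frac{\zeta'(2)}{\zeta(2)^2}, \] $\gamma$ being the Euler–Mascheroni constant.
   Context: $\mu$ is the Möbius function and $\zeta$ the Riemann zeta function. *)

theory Defs
  imports "HOL-Analysis.Analysis" "HOL-Computational_Algebra.Squarefree"
begin

definition moebius_mu :: "nat \<Rightarrow> int" where
  "moebius_mu n = (if squarefree n then (-1) ^ card (prime_factors n) else 0)"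

text \<open>Riemann zeta function on the reals, via its Dirichlet series (meaningful for s > 1).\<close>
definition zeta :: "real \<Rightarrow> real" where
  "zeta s = (\<Sum>n. 1 / real (Suc n) powr s)"

end

theory Submission
  imports Defs
begin

text \<open>
  The proof has two independent halves.
  (1) A general partial-summation argument (for an arbitrary arithmetic function a): if the
  summatory function Q(z) of a satisfies |Q(z) - c z| <= K sqrt z for z >= 1, then the summatory
  function S(z) of a(n)/n satisfies |S(z) - c log z - B| <= 3K/sqrt z for some constant B.
  Instead of Abel summation with integrals we show that Phi(t) = S(t) - Q(t)/t - c log t
  stays between two monotone envelopes Phi(t) +- 2K/sqrt t with a common limit.
  (2) For a = mu^2 the constants c and B are forced: regrouping the harmonic sum H(M^2) by
  square parts, H(M^2) = sum over d <= M of S(M^2/d^2)/d^2, and comparing with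
  H(M^2) = 2 log M + gamma + o(1) yields c = 1/zeta(2) and B = gamma/zeta(2) - 2 zeta'(2)/zeta(2)^2.
  With K = 0.68 the error bound is 3 * 0.68 = 2.04.
\<close>

definition squarefree_indicator :: "nat \<Rightarrow> real" where
  "squarefree_indicator n = (if squarefree n then 1 else 0)"

lemma moebius_mu_squared: "real_of_int (moebius_mu n ^ 2) = squarefree_indicator n"
  by (simp add: squarefree_indicator_def moebius_mu_def power_even_eq[of _ 2] flip: power_mult)

lemma square_part_squarefree_times_square:
  fixes m d :: nat
  assumes "squarefree m" "d > 0"
  shows "square_part (m * d ^ 2) = d"
proof -
  have m0: "m \<noteq> 0" using assms(1) by (metis not_squarefree_0)
  have "normalize (square_part (m * d ^ 2)) = normalize d"
  proof (rule multiplicity_eq_imp_eq)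
    show "square_part (m * d ^ 2) \<noteq> 0" "d \<noteq> 0" using m0 assms by simp_all
    fix p :: nat assume p: "prime p"
    have "multiplicity p m \<le> 1"
      using assms(1) m0 p squarefree_factorial_semiring'' by blast
    moreover have "multiplicity p (m * d ^ 2) = multiplicity p m + 2 * multiplicity p d"
      using p m0 assms(2)
      by (simp add: prime_elem_multiplicity_mult_distrib prime_elem_multiplicity_power_distrib)
    ultimately show "multiplicity p (square_part (m * d ^ 2)) = multiplicity p d"
      using p by (simp add: prime_multiplicity_square_part)
  qed
  then show ?thesis by simp
qed

lemma squarefree_part_squarefree_times_square:
  fixes m d :: nat
  assumes "squarefree m" "d > 0"
  shows "squarefree_part (m * d ^ 2) = m"
  using square_part_squarefree_times_square[OF assms] assms
  by (simp add: squarefree_part_def) (metis not_squarefree_0 gr0I)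

text \<open>Every n >= 1 is uniquely m d^2 with m squarefree, so a sum over 1..N can be regrouped by the
  square part d.\<close>
lemma sum_by_squarefree_decomposition:
  fixes f :: "nat \<Rightarrow> 'a :: comm_monoid_add"
  shows "(\<Sum>n\<in>{1..N}. f n) = (\<Sum>d\<in>{1..N}. \<Sum>m | m \<in> {1..N div d ^ 2} \<and> squarefree m. f (m * d ^ 2))"
proof -
  define S where "S = Sigma {1..N} (\<lambda>d. {m. m \<in> {1..N div d ^ 2} \<and> squarefree m})"
  have "(\<Sum>(d, m)\<in>S. f (m * d ^ 2)) = (\<Sum>n\<in>{1..N}. f n)"
  proof (rule sum.reindex_bij_witness
        [where i = "\<lambda>n. (square_part n, squarefree_part n)" and j = "\<lambda>(d, m). m * d ^ 2"])
    fix a assume "a \<in> S"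
    then obtain d m where a: "a = (d, m)" "1 \<le> d" "1 \<le> m" "m \<le> N div d ^ 2" "squarefree m"
      unfolding S_def by auto
    then show "(square_part (case a of (d, m) \<Rightarrow> m * d ^ 2),
                squarefree_part (case a of (d, m) \<Rightarrow> m * d ^ 2)) = a"
      using square_part_squarefree_times_square squarefree_part_squarefree_times_square by auto
    have "m * d ^ 2 \<le> N" using a(4) by (meson le_trans mult_le_mono1 div_times_less_eq_dividend)
    then show "(case a of (d, m) \<Rightarrow> m * d ^ 2) \<in> {1..N}" using a by simp
  next
    fix n assume n: "n \<in> {1..N}"
    show "(case (square_part n, squarefree_part n) of (d, m) \<Rightarrow> m * d ^ 2) = n"
      using squarefree_decompose[of n] by simp
    have d: "square_part n > 0" using n square_part_0_iff[of n] by (simp del: square_part_0_iff)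
    have "square_part n \<le> square_part n ^ 2" by (simp add: power2_eq_square)
    also have "\<dots> \<le> n" using n by (simp add: dvd_imp_le)
    finally have "square_part n \<le> N" using n by simp
    moreover have "squarefree_part n \<le> N div square_part n ^ 2"
      using squarefree_decompose[of n] n d
      by (metis div_le_mono nonzero_mult_div_cancel_right power_not_zero atLeastAtMost_iff less_not_refl3)
    moreover have "squarefree_part n \<ge> 1" using squarefree_part_nonzero[of n] by linarith
    ultimately show "(square_part n, squarefree_part n) \<in> S"
      unfolding S_def using d by auto
  qed auto
  moreover have "(\<Sum>(d, m)\<in>S. f (m * d ^ 2)) =
      (\<Sum>d\<in>{1..N}. \<Sum>m | m \<in> {1..N div d ^ 2} \<and> squarefree m. f (m * d ^ 2))"
    unfolding S_def by (subst sum.Sigma) auto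
  ultimately show ?thesis by simp
qed

definition partial_sum :: "(nat \<Rightarrow> real) \<Rightarrow> real \<Rightarrow> real" where
  "partial_sum a z = (\<Sum>n\<in>{1..nat \<lfloor>z\<rfloor>}. a n)"

lemma partial_sum_of_nat: "partial_sum a (real n) = (\<Sum>k\<in>{1..n}. a k)"
  by (simp add: partial_sum_def)

lemma partial_sum_unit_interval:
  assumes "real n \<le> t" "t < real n + 1"
  shows "partial_sum a t = partial_sum a (real n)"
proof -
  have "nat \<lfloor>t\<rfloor> = n" using assms by (metis floor_eq2 nat_int of_int_of_nat_eq)
  then show ?thesis by (simp add: partial_sum_def)
qed

text \<open>Partial summation suggests S(t) = Q(t)/t + c log t + const + O(K/sqrt t);
  the envelopes Phi(t) +- 2K/sqrt t turn out to be monotone.\<close>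
definition log_remainder :: "(nat \<Rightarrow> real) \<Rightarrow> real \<Rightarrow> real \<Rightarrow> real" where
  "log_remainder a c t =
     partial_sum (\<lambda>n. a n / real n) t - partial_sum a t / t - c * ln t"

text \<open>On [n, n+1] (right endpoint included) Phi has a closed form: the jump a(n+1)/(n+1) of S at
  t = n+1 cancels the jump of Q(t)/t, so Phi is continuous.\<close>
lemma log_remainder_unit_interval:
  assumes "real n \<le> t" "t \<le> real n + 1"
  shows "log_remainder a c t =
           partial_sum (\<lambda>k. a k / real k) (real n) - partial_sum a (real n) / t - c * ln t"
proof (cases "t < real n + 1")
  case True
  then show ?thesis
    using partial_sum_unit_interval[OF assms(1)] by (simp add: log_remainder_def)
next
  case False
  then have t: "t = real (Suc n)" using assms by simp
  have "partial_sum a t = partial_sum a (real n) + a (Suc n)"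
    "partial_sum (\<lambda>k. a k / real k) t = partial_sum (\<lambda>k. a k / real k) (real n) + a (Suc n) / t"
    unfolding t partial_sum_of_nat by simp_all
  moreover have "t > 0" using t by simp
  ultimately show ?thesis by (simp add: log_remainder_def add_divide_distrib)
qed

lemma has_real_derivative_envelope:
  assumes t: "t > 0"
  shows "((\<lambda>t. e * (s - q / t - c * ln t) + 2 * K / sqrt t) has_real_derivative
           (e * (q - c * t) - K * sqrt t) / t ^ 2) (at t)"
proof -
  have inv: "((\<lambda>t. inverse t) has_real_derivative - (inverse t * 1 * inverse t)) (at t)"
    using t by (intro DERIV_inverse' DERIV_ident) auto
  have inv_sqrt: "((\<lambda>t. inverse (sqrt t)) has_real_derivative
      - (inverse (sqrt t) * (inverse (sqrt t) / 2) * inverse (sqrt t))) (at t)"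
    using t by (intro DERIV_inverse' DERIV_real_sqrt) auto
  have "((\<lambda>t. e * (s - q * inverse t - c * ln t) + 2 * K * inverse (sqrt t)) has_real_derivative
      e * (0 - q * (- (inverse t * 1 * inverse t)) - c * inverse t)
        + 2 * K * (- (inverse (sqrt t) * (inverse (sqrt t) / 2) * inverse (sqrt t)))) (at t)"
    using t by (intro DERIV_add DERIV_diff DERIV_cmult DERIV_const inv inv_sqrt DERIV_ln)
  moreover have "e * (0 - q * (- (inverse t * 1 * inverse t)) - c * inverse t)
        + 2 * K * (- (inverse (sqrt t) * (inverse (sqrt t) / 2) * inverse (sqrt t)))
      = (e * (q - c * t) - K * sqrt t) / t ^ 2"
    using t real_sqrt_mult_self[of t] by (simp add: field_simps power2_eq_square)
  moreover have "(\<lambda>t. e * (s - q * inverse t - c * ln t) + 2 * K * inverse (sqrt t))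
      = (\<lambda>t. e * (s - q / t - c * ln t) + 2 * K / sqrt t)"
    by (simp add: divide_inverse)
  ultimately show ?thesis by simp
qed

lemma antimono_from_unit_intervals:
  fixes G :: "real \<Rightarrow> real"
  assumes local: "\<And>n x y. 1 \<le> n \<Longrightarrow> real n \<le> x \<Longrightarrow> x \<le> y \<Longrightarrow> y \<le> real n + 1 \<Longrightarrow> G y \<le> G x"
    and xy: "1 \<le> x" "x \<le> y"
  shows "G y \<le> G x"
proof -
  have integers: "G (real m) \<le> G (real n)" if "1 \<le> n" "n \<le> m" for m n
    using that(2)
  proof (induction m rule: dec_induct)
    case (step m)
    then have "G (real (Suc m)) \<le> G (real m)" using that(1) local[of m] by simp
    with step.IH show ?case by simp
  qed simp
  define n m where "n = nat \<lfloor>x\<rfloor>" and "m = nat \<lfloor>y\<rfloor>"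
  have n: "1 \<le> n" "real n \<le> x" "x \<le> real n + 1" and m: "1 \<le> m" "real m \<le> y" "y \<le> real m + 1"
    using xy unfolding n_def m_def by linarith+
  show ?thesis
  proof (cases "m = n")
    case True
    then show ?thesis using local[OF n(1,2) xy(2)] m by simp
  next
    case False
    then have "Suc n \<le> m" using xy unfolding n_def m_def by linarith
    have "G y \<le> G (real m)" using local[of m "real m" y] m by simp
    also have "\<dots> \<le> G (real (Suc n))" using integers[OF _ \<open>Suc n \<le> m\<close>] by simp
    also have "\<dots> \<le> G x" using local[of n x "real (Suc n)"] n by simp
    finally show ?thesis .
  qed
qed

text \<open>For |e| <= 1 the envelope e*Phi(t) + 2K/sqrt t is antitone on [1, oo): on a unit interval
  its derivative is (e(Q(n) - c t) - K sqrt t)/t^2 <= 0 by the square-root error bound for Q.\<close>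
lemma log_remainder_envelope_antimono:
  fixes a :: "nat \<Rightarrow> real"
  assumes count: "\<And>z. z \<ge> 1 \<Longrightarrow> \<bar>partial_sum a z - c * z\<bar> \<le> K * sqrt z"
    and e: "\<bar>e\<bar> \<le> 1" and xy: "1 \<le> x" "x \<le> y"
  shows "e * log_remainder a c y + 2 * K / sqrt y \<le> e * log_remainder a c x + 2 * K / sqrt x"
proof (rule antimono_from_unit_intervals[OF _ xy])
  fix n :: nat and x y :: real
  assume n: "1 \<le> n" "real n \<le> x" "x \<le> y" "y \<le> real n + 1"
  define s q where "s = partial_sum (\<lambda>k. a k / real k) (real n)" and "q = partial_sum a (real n)"
  define f where "f t = e * (s - q / t - c * ln t) + 2 * K / sqrt t" for t
  have "f y \<le> f x"
  proof (rule DERIV_nonpos_imp_decreasing_open[OF n(3)])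
    fix t assume t: "x < t" "t < y"
    then have t1: "t \<ge> 1" "t > 0" using n by linarith+
    have "q = partial_sum a t"
      unfolding q_def using partial_sum_unit_interval[of n t a] t n by simp
    have "e * (q - c * t) \<le> \<bar>e\<bar> * \<bar>q - c * t\<bar>" by (metis abs_ge_self abs_mult)
    also have "\<dots> \<le> \<bar>q - c * t\<bar>" using e by (simp add: mult_left_le_one_le)
    also have "\<dots> \<le> K * sqrt t" using count[OF t1(1)] \<open>q = partial_sum a t\<close> by simp
    finally have "(e * (q - c * t) - K * sqrt t) / t ^ 2 \<le> 0"
      by (intro divide_nonpos_nonneg) auto
    then show "\<exists>D. (f has_real_derivative D) (at t) \<and> D \<le> 0"
      using has_real_derivative_envelope[OF t1(2)] unfolding f_def by blast
  next
    show "continuous_on {x..y} f" using n unfolding f_def by (intro continuous_intros) auto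
  qed
  moreover have "log_remainder a c t = s - q / t - c * ln t" if "real n \<le> t" "t \<le> real n + 1" for t
    using log_remainder_unit_interval[OF that] unfolding s_def q_def by simp
  ultimately show "e * log_remainder a c y + 2 * K / sqrt y \<le> e * log_remainder a c x + 2 * K / sqrt x"
    using n unfolding f_def by simp
qed

text \<open>The two envelopes Phi +- 2K/sqrt t are monotone in opposite
  directions and differ by 4K/sqrt t, so they converge to a common limit L, and Phi(z) stays
  within 2K/sqrt z of L; together with |Q(z)/z - c| <= K/sqrt z this gives B = L + c.\<close>
lemma logarithmic_sum_asymptotic:
  fixes a :: "nat \<Rightarrow> real"
  assumes count: "\<And>z. z \<ge> 1 \<Longrightarrow> \<bar>partial_sum a z - c * z\<bar> \<le> K * sqrt z"
  shows "\<exists>B. \<forall>z\<ge>1. \<bar>partial_sum (\<lambda>n. a n / real n) z - c * ln z - B\<bar> \<le> 3 * K / sqrt z"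
proof -
  let ?Phi = "log_remainder a c"
  have K: "K \<ge> 0" using count[of 1] by simp
  have upper_mono: "?Phi y + 2 * K / sqrt y \<le> ?Phi x + 2 * K / sqrt x" if "1 \<le> x" "x \<le> y" for x y
    using log_remainder_envelope_antimono[OF count, of 1 x y] that by simp
  have lower_mono: "?Phi x - 2 * K / sqrt x \<le> ?Phi y - 2 * K / sqrt y" if "1 \<le> x" "x \<le> y" for x y
    using log_remainder_envelope_antimono[OF count, of "-1" x y] that by simp
  define upper lower where
    "upper i = ?Phi (real (Suc i)) + 2 * K / sqrt (real (Suc i))" and
    "lower i = ?Phi (real (Suc i)) - 2 * K / sqrt (real (Suc i))" for i
  have "decseq upper" unfolding decseq_def upper_def using upper_mono by simp
  moreover have "lower 0 \<le> upper i" for i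
  proof -
    have "lower 0 \<le> lower i" unfolding lower_def using lower_mono[of 1 "real (Suc i)"] by simp
    also have "\<dots> \<le> upper i" unfolding lower_def upper_def using K by simp
    finally show ?thesis .
  qed
  ultimately obtain L where upper_lim: "upper \<longlonglongrightarrow> L" using decseq_convergent by blast
  have "(\<lambda>i. K * sqrt (inverse (real (Suc i)))) \<longlonglongrightarrow> K * sqrt 0"
    by (intro tendsto_intros LIMSEQ_inverse_real_of_nat)
  then have "(\<lambda>i. upper i - lower i) \<longlonglongrightarrow> 0"
    by (simp add: upper_def lower_def real_sqrt_inverse divide_inverse)
  from tendsto_diff[OF upper_lim this] have lower_lim: "lower \<longlonglongrightarrow> L" by simp
  show ?thesis
  proof (intro exI allI impI)
    fix z :: real assume z: "z \<ge> 1"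
    have lower_le: "?Phi z - 2 * K / sqrt z \<le> L"
    proof (rule LIMSEQ_le_const[OF lower_lim], intro exI allI impI)
      fix i assume "i \<ge> nat \<lceil>z\<rceil>"
      then have "z \<le> real (Suc i)" by linarith
      then show "?Phi z - 2 * K / sqrt z \<le> lower i" unfolding lower_def using lower_mono z by simp
    qed
    have upper_ge: "L \<le> ?Phi z + 2 * K / sqrt z"
    proof (rule LIMSEQ_le_const2[OF upper_lim], intro exI allI impI)
      fix i assume "i \<ge> nat \<lceil>z\<rceil>"
      then have "z \<le> real (Suc i)" by linarith
      then show "upper i \<le> ?Phi z + 2 * K / sqrt z" unfolding upper_def using upper_mono z by simp
    qed
    have "partial_sum a z / z - c = (partial_sum a z - c * z) / z" using z by (simp add: field_simps)
    then have "\<bar>partial_sum a z / z - c\<bar> = \<bar>partial_sum a z - c * z\<bar> / z" using z by simp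
    also have "\<dots> \<le> K * sqrt z / z" using count[OF z] z by (simp add: divide_right_mono)
    also have "\<dots> = K / sqrt z"
      using z by (metis divide_divide_eq_right real_div_sqrt zero_le_one order_trans)
    finally have "\<bar>partial_sum a z / z - c\<bar> \<le> K / sqrt z" .
    with lower_le upper_ge show "\<bar>partial_sum (\<lambda>n. a n / real n) z - c * ln z - (L + c)\<bar> \<le> 3 * K / sqrt z"
      unfolding log_remainder_def by (simp add: abs_le_iff)
  qed
qed

lemma summable_inverse_powr:
  assumes "s > 1"
  shows "summable (\<lambda>n. 1 / real (Suc n) powr s)"
proof -
  have "summable (\<lambda>n. real n powr (- s))" using assms summable_real_powr_iff by simp
  then have "summable (\<lambda>n. real (Suc n) powr (- s))" by (subst summable_Suc_iff)
  then show ?thesis by (simp add: powr_minus_divide)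
qed

text \<open>Convergence of the differentiated series for s > 1: with eps = (s-1)/2 one has
  log n <= n^eps/eps, so the terms are dominated by n^(eps - s)/eps, and eps - s < -1.\<close>
lemma summable_ln_over_powr:
  assumes s: "s > 1"
  shows "summable (\<lambda>n. ln (real (Suc n)) / real (Suc n) powr s)"
proof (rule summable_comparison_test)
  define \<epsilon> where "\<epsilon> = (s - 1) / 2"
  have \<epsilon>: "\<epsilon> > 0" "\<epsilon> - s < -1" using s unfolding \<epsilon>_def by (simp_all add: field_simps)
  have "summable (\<lambda>n. real n powr (\<epsilon> - s))" using \<epsilon> summable_real_powr_iff by simp
  then have "summable (\<lambda>n. real (Suc n) powr (\<epsilon> - s))" by (subst summable_Suc_iff)
  then show "summable (\<lambda>n. real (Suc n) powr (\<epsilon> - s) / \<epsilon>)" by (rule summable_divide)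
  show "\<exists>N. \<forall>n\<ge>N. norm (ln (real (Suc n)) / real (Suc n) powr s) \<le> real (Suc n) powr (\<epsilon> - s) / \<epsilon>"
  proof (intro exI allI impI)
    fix n :: nat
    define x where "x = real (Suc n)"
    have x: "x \<ge> 1" unfolding x_def by simp
    have "ln x / x powr s \<le> (x powr \<epsilon> / \<epsilon>) / x powr s"
      using ln_powr_bound[OF x \<epsilon>(1)] x by (intro divide_right_mono) auto
    also have "\<dots> = x powr (\<epsilon> - s) / \<epsilon>" using x by (simp add: powr_diff)
    finally show "norm (ln (real (Suc n)) / real (Suc n) powr s) \<le> real (Suc n) powr (\<epsilon> - s) / \<epsilon>"
      using x unfolding x_def by simp
  qed
qed

lemma has_real_derivative_inverse_powr:
  fixes a :: real
  shows "((\<lambda>x. 1 / a powr x) has_real_derivative - ln a / a powr s) (at s)"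
proof -
  have "((\<lambda>x. a powr (- x)) has_real_derivative (- 1) * ln a * a powr (- s)) (at s)"
    by (intro derivative_eq_intros) auto
  then show ?thesis by (simp add: powr_minus_divide)
qed

text \<open>zeta'(s) = - sum log n / n^s for s > 1, by termwise differentiation; the series of
  derivatives converges uniformly on ((1+s)/2, s+1) by the Weierstrass M-test.\<close>
lemma deriv_zeta:
  assumes s: "s > 1"
  shows "deriv zeta s = - (\<Sum>n. ln (real (Suc n)) / real (Suc n) powr s)"
proof -
  define S where "S = {(1 + s) / 2 <..< s + 1}"
  define f' where "f' n x = - ln (real (Suc n)) / real (Suc n) powr x" for n x
  have uniform: "uniformly_convergent_on S (\<lambda>n x. \<Sum>i<n. f' i x)"
  proof (rule Weierstrass_m_test'_ev[OF always_eventually summable_ln_over_powr], intro allI ballI)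
    show "(1 + s) / 2 > 1" using s by simp
    fix n x assume "x \<in> S"
    then have "real (Suc n) powr ((1 + s) / 2) \<le> real (Suc n) powr x"
      unfolding S_def by (intro powr_mono) auto
    then show "norm (f' n x) \<le> ln (real (Suc n)) / real (Suc n) powr ((1 + s) / 2)"
      unfolding f'_def by (simp add: divide_left_mono)
  qed
  have "((\<lambda>x. \<Sum>n. 1 / real (Suc n) powr x) has_field_derivative (\<Sum>n. f' n s)) (at s)"
  proof (rule has_field_derivative_series'(2)
      [where f = "\<lambda>n x. 1 / real (Suc n) powr x" and S = S and x0 = s, OF _ _ uniform])
    show "convex S" "s \<in> S" "s \<in> interior S" using s by (simp_all add: S_def)
    show "summable (\<lambda>n. 1 / real (Suc n) powr s)" using summable_inverse_powr[OF s] .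
    show "((\<lambda>x. 1 / real (Suc n) powr x) has_field_derivative f' n x) (at x within S)" for n x
      unfolding f'_def by (rule has_field_derivative_at_within[OF has_real_derivative_inverse_powr])
  qed
  then have "deriv zeta s = (\<Sum>n. f' n s)"
    unfolding zeta_def[abs_def] by (rule DERIV_imp_deriv)
  also have "\<dots> = - (\<Sum>n. ln (real (Suc n)) / real (Suc n) powr s)"
    unfolding f'_def using suminf_minus[OF summable_ln_over_powr[OF s]] by simp
  finally show ?thesis .
qed

lemma harm_square_decomposition:
  "harm (M ^ 2) = (\<Sum>d\<in>{1..M}.
     partial_sum (\<lambda>n. squarefree_indicator n / real n) (real (M ^ 2) / real (d ^ 2)) / real d ^ 2)"
proof -
  have inner: "(\<Sum>m | m \<in> {1..N div d ^ 2} \<and> squarefree m. inverse (real (m * d ^ 2)))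
      = partial_sum (\<lambda>n. squarefree_indicator n / real n) (real N / real (d ^ 2)) / real d ^ 2"
    for N d :: nat
  proof -
    have "partial_sum (\<lambda>n. squarefree_indicator n / real n) (real N / real (d ^ 2))
        = (\<Sum>m\<in>{1..N div d ^ 2}. if squarefree m then 1 / real m else 0)"
      unfolding partial_sum_def floor_divide_of_nat_eq nat_int
      by (intro sum.cong) (auto simp: squarefree_indicator_def)
    also have "\<dots> = (\<Sum>m | m \<in> {1..N div d ^ 2} \<and> squarefree m. 1 / real m)"
      by (simp add: sum.If_cases Int_def conj_commute)
    finally show ?thesis by (simp add: sum_distrib_right divide_inverse)
  qed
  have "harm (M ^ 2) = (\<Sum>d\<in>{1..M ^ 2}.
      partial_sum (\<lambda>n. squarefree_indicator n / real n) (real (M ^ 2) / real (d ^ 2)) / real d ^ 2)"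
    unfolding harm_def sum_by_squarefree_decomposition[of "\<lambda>n. inverse (real n)"] inner by simp
  also have "\<dots> = (\<Sum>d\<in>{1..M}.
      partial_sum (\<lambda>n. squarefree_indicator n / real n) (real (M ^ 2) / real (d ^ 2)) / real d ^ 2)"
  proof (rule sum.mono_neutral_right)
    show "{1..M} \<subseteq> {1..M ^ 2}" by (auto simp: power2_eq_square)
    have "real (M ^ 2) / real (d ^ 2) < 1" if "d > M" for d
      using that by (simp add: power_strict_mono)
    then show "\<forall>d\<in>{1..M ^ 2} - {1..M}.
        partial_sum (\<lambda>n. squarefree_indicator n / real n) (real (M ^ 2) / real (d ^ 2)) / real d ^ 2 = 0"
      by (auto simp: partial_sum_def)
  qed simp
  finally show ?thesis .
qed

text \<open>H(M) <= 1 + log M, because H(n) - log n decreases.\<close>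
lemma harm_le_one_plus_ln: "M \<ge> 1 \<Longrightarrow> harm M \<le> 1 + ln (real M)"
  using decseq_harm_diff_ln[unfolded decseq_def, rule_format, of 0 "M - 1"]
  by (simp add: harm_def)

text \<open>Tail estimate for zeta(2): sum over n > M of 1/n^2 <= 1/M (telescoping against 1/(n(n+1))).\<close>
lemma tail_inverse_squares_le:
  assumes "M \<ge> 1"
  shows "(\<Sum>k. 1 / real (Suc (k + M)) ^ 2) \<le> 1 / real M"
proof -
  have telescope: "(\<lambda>k. 1 / real (k + M) - 1 / real (Suc k + M)) sums (1 / real (0 + M) - 0)"
  proof (rule telescope_sums')
    have "filterlim (\<lambda>k. real M + real k) at_top sequentially"
      by (rule filterlim_tendsto_add_at_top[OF tendsto_const filterlim_real_sequentially])
    then show "(\<lambda>k. 1 / real (k + M)) \<longlonglongrightarrow> 0"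
      by (simp add: divide_inverse add.commute tendsto_inverse_0_at_top)
  qed
  have term_le: "1 / real (Suc (k + M)) ^ 2 \<le> 1 / real (k + M) - 1 / real (Suc k + M)" for k
  proof -
    define x where "x = real (k + M)"
    have x: "x \<ge> 1" using assms unfolding x_def by simp
    have "1 / (x + 1) ^ 2 \<le> 1 / (x * (x + 1))"
      using x by (intro divide_left_mono) (auto simp: power2_eq_square)
    also have "\<dots> = 1 / x - 1 / (x + 1)" using x by (simp add: field_simps)
    finally show ?thesis unfolding x_def by (simp add: add.commute)
  qed
  have "summable (\<lambda>k. 1 / real (Suc (k + M)) ^ 2)"
    by (rule summable_comparison_test[OF _ sums_summable[OF telescope]])
       (use term_le in \<open>auto intro!: exI[of _ 0]\<close>)
  then have "(\<Sum>k. 1 / real (Suc (k + M)) ^ 2) \<le> (\<Sum>k. 1 / real (k + M) - 1 / real (Suc k + M))"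
    by (rule suminf_le[OF term_le _ sums_summable[OF telescope]])
  also have "\<dots> = 1 / real M" using telescope by (simp add: sums_iff)
  finally show ?thesis .
qed

lemma ln_over_nat_tendsto_zero: "(\<lambda>M. ln (real M) / real M) \<longlonglongrightarrow> 0"
  by (rule filterlim_compose[OF ln_x_over_x_tendsto_0 filterlim_real_sequentially])

text \<open>If err(x) = O(K/sqrt x), the errors at x = M^2/d^2 weighted by 1/d^2 sum to at most
  (K/M) H(M) <= K(1 + log M)/M, which tends to 0.\<close>
lemma weighted_error_sum_tendsto_zero:
  fixes err :: "real \<Rightarrow> real"
  assumes bound: "\<And>x. x \<ge> 1 \<Longrightarrow> \<bar>err x\<bar> \<le> K / sqrt x"
  shows "(\<lambda>M. \<Sum>i<M. err (real (M ^ 2) / real (Suc i ^ 2)) / real (Suc i) ^ 2) \<longlonglongrightarrow> 0"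
proof (rule Lim_null_comparison)
  have K: "K \<ge> 0" using bound[of 1] by simp
  show "\<forall>\<^sub>F M in sequentially.
      norm (\<Sum>i<M. err (real (M ^ 2) / real (Suc i ^ 2)) / real (Suc i) ^ 2) \<le> K * (1 + ln (real M)) / real M"
    using eventually_ge_at_top[of "1::nat"]
  proof eventually_elim
    case (elim M)
    have term_le: "\<bar>err (real (M ^ 2) / real (Suc i ^ 2)) / real (Suc i) ^ 2\<bar> \<le> K / real M * inverse (real (Suc i))"
      if i: "i < M" for i
    proof -
      define x where "x = real (M ^ 2) / real (Suc i ^ 2)"
      have "x \<ge> 1" unfolding x_def using i by (simp add: power_mono)
      moreover have "sqrt x = real M / real (Suc i)" unfolding x_def by (simp add: real_sqrt_divide)
      ultimately have "\<bar>err x\<bar> \<le> K * real (Suc i) / real M" using bound[of x] by simp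
      then have "\<bar>err x\<bar> / real (Suc i) ^ 2 \<le> K * real (Suc i) / real M / real (Suc i) ^ 2"
        by (intro divide_right_mono) auto
      also have "\<dots> = K / real M * inverse (real (Suc i))"
      proof -
        have "K * y / real M / y ^ 2 = K / real M * inverse y" if "y > 0" for y :: real
          using that elim by (simp add: field_simps power2_eq_square)
        then show ?thesis by simp
      qed
      finally show ?thesis unfolding x_def by (simp add: abs_div)
    qed
    have "norm (\<Sum>i<M. err (real (M ^ 2) / real (Suc i ^ 2)) / real (Suc i) ^ 2)
        \<le> (\<Sum>i<M. K / real M * inverse (real (Suc i)))"
      unfolding real_norm_def by (rule order_trans[OF sum_abs sum_mono]) (use term_le in auto)
    also have "\<dots> = K / real M * harm M" by (simp add: harm_altdef sum_distrib_left)
    also have "\<dots> \<le> K / real M * (1 + ln (real M))"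
      using harm_le_one_plus_ln[OF elim] K by (intro mult_left_mono) auto
    finally show ?case by simp
  qed
  have "(\<lambda>M. K * (inverse (real M) + ln (real M) / real M)) \<longlonglongrightarrow> K * (0 + 0)"
    by (intro tendsto_intros ln_over_nat_tendsto_zero
        tendsto_inverse_0_at_top[OF filterlim_real_sequentially])
  then show "(\<lambda>M. K * (1 + ln (real M)) / real M) \<longlonglongrightarrow> 0"
    by (simp add: divide_inverse algebra_simps)
qed

lemma ln_times_tail_tendsto_zero:
  "(\<lambda>M. ln (real M) * (\<Sum>k. 1 / real (Suc (k + M)) ^ 2)) \<longlonglongrightarrow> 0"
proof (rule Lim_null_comparison[OF _ ln_over_nat_tendsto_zero])
  show "\<forall>\<^sub>F M in sequentially. norm (ln (real M) * (\<Sum>k. 1 / real (Suc (k + M)) ^ 2)) \<le> ln (real M) / real M"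
    using eventually_ge_at_top[of "1::nat"]
  proof eventually_elim
    case (elim M)
    have "summable (\<lambda>k. 1 / real (Suc (k + M)) ^ 2)"
      using summable_ignore_initial_segment[OF summable_inverse_powr[of 2], of M] by simp
    then have "(\<Sum>k. 1 / real (Suc (k + M)) ^ 2) \<ge> 0" by (intro suminf_nonneg) auto
    moreover have "ln (real M) \<ge> 0" using elim by simp
    ultimately show ?case
      using mult_left_mono[OF tail_inverse_squares_le[OF elim], of "ln (real M)"] by simp
  qed
qed

lemma ln_coefficient_zero:
  fixes a :: real
  assumes "(\<lambda>M. a * ln (real M) + f M) \<longlonglongrightarrow> L" and "f \<longlonglongrightarrow> L'"
  shows "a = 0"
proof (rule ccontr)
  assume a: "a \<noteq> 0"
  have "(\<lambda>M. ((a * ln (real M) + f M) - f M) / a) \<longlonglongrightarrow> (L - L') / a"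
    by (intro tendsto_intros assms a)
  then have "(\<lambda>M. ln (real M)) \<longlonglongrightarrow> (L - L') / a" using a by simp
  moreover have "filterlim (\<lambda>M. ln (real M)) at_infinity sequentially"
    by (rule filterlim_at_top_imp_at_infinity[OF filterlim_compose[OF ln_at_top filterlim_real_sequentially]])
  ultimately show False
    using not_tendsto_and_filterlim_at_infinity[OF trivial_limit_sequentially] by blast
qed

text \<open>Insert S(x) = c log x + B + err(x) into the identity for
  H(M^2):  H(M^2) - 2 log M = 2(c zeta(2) - 1) log M + R(M), where R(M) tends to
  B zeta(2) + 2c zeta'(2).  Since H(M^2) - 2 log M tends to Euler's constant, the coefficient of
  log M vanishes, i.e. c = 1/zeta(2), and then gamma = B zeta(2) + 2 zeta'(2)/zeta(2).\<close>
lemma squarefree_log_sum_constants: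
  assumes bound: "\<And>z. z \<ge> 1 \<Longrightarrow>
    \<bar>partial_sum (\<lambda>n. squarefree_indicator n / real n) z - c * ln z - B\<bar> \<le> K / sqrt z"
  shows "c = 1 / zeta 2" and "B = euler_mascheroni / zeta 2 - 2 * deriv zeta 2 / zeta 2 ^ 2"
proof -
  let ?S = "partial_sum (\<lambda>n. squarefree_indicator n / real n)"
  define Z P where "Z = (\<Sum>i. 1 / real (Suc i) ^ 2)" and "P = (\<Sum>i. ln (real (Suc i)) / real (Suc i) ^ 2)"
  define T where "T M = (\<Sum>i<M. 1 / real (Suc i) ^ 2)" for M
  define PP where "PP M = (\<Sum>i<M. ln (real (Suc i)) / real (Suc i) ^ 2)" for M
  define err where "err x = ?S x - c * ln x - B" for x
  define E where "E M = (\<Sum>i<M. err (real (M ^ 2) / real (Suc i ^ 2)) / real (Suc i) ^ 2)" for M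
  define R where "R M = B * T M - 2 * c * PP M + E M - 2 * c * (ln (real M) * (Z - T M))" for M
  have summable_Z: "summable (\<lambda>i. 1 / real (Suc i) ^ 2)" using summable_inverse_powr[of 2] by simp
  have summable_P: "summable (\<lambda>i. ln (real (Suc i)) / real (Suc i) ^ 2)"
    using summable_ln_over_powr[of 2] by simp
  have zeta_2: "zeta 2 = Z" unfolding zeta_def Z_def by simp
  have deriv_zeta_2: "deriv zeta 2 = - P" using deriv_zeta[of 2] unfolding P_def by simp
  have "Z > 0" unfolding Z_def by (rule suminf_pos[OF summable_Z]) simp
  have identity: "harm (M ^ 2) - 2 * ln (real M) = 2 * (c * Z - 1) * ln (real M) + R M" for M
  proof -
    have split_term: "?S (real (M ^ 2) / real (Suc i ^ 2)) / real (Suc i) ^ 2 =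
        (2 * c * ln (real M) + B) * (1 / real (Suc i) ^ 2) - 2 * c * (ln (real (Suc i)) / real (Suc i) ^ 2)
        + err (real (M ^ 2) / real (Suc i ^ 2)) / real (Suc i) ^ 2" if "i < M" for i
    proof -
      have ln_quotient: "ln (real (M ^ 2) / real (Suc i ^ 2)) = 2 * ln (real M) - 2 * ln (real (Suc i))"
        using that by (simp add: ln_div ln_realpow)
      have S_eq: "?S (real (M ^ 2) / real (Suc i ^ 2)) = 2 * c * ln (real M) - 2 * c * ln (real (Suc i)) + B
          + err (real (M ^ 2) / real (Suc i ^ 2))"
        unfolding err_def ln_quotient by (simp add: algebra_simps)
      show ?thesis unfolding S_eq by (simp add: field_simps)
    qed
    have "harm (M ^ 2) = (\<Sum>i<M. ?S (real (M ^ 2) / real (Suc i ^ 2)) / real (Suc i) ^ 2)"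
      unfolding harm_square_decomposition sum_bounds_lt_plus1[symmetric] ..
    also have "\<dots> = (\<Sum>i<M. (2 * c * ln (real M) + B) * (1 / real (Suc i) ^ 2)
        - 2 * c * (ln (real (Suc i)) / real (Suc i) ^ 2)
        + err (real (M ^ 2) / real (Suc i ^ 2)) / real (Suc i) ^ 2)"
      by (rule sum.cong[OF refl], rule split_term) simp
    also have "\<dots> = (2 * c * ln (real M) + B) * T M - 2 * c * PP M + E M"
      unfolding T_def PP_def E_def by (simp add: sum.distrib sum_subtractf sum_distrib_left)
    finally show ?thesis unfolding R_def by (simp add: algebra_simps)
  qed
  have lim_T: "T \<longlonglongrightarrow> Z" unfolding T_def Z_def by (rule summable_LIMSEQ[OF summable_Z])
  have lim_PP: "PP \<longlonglongrightarrow> P" unfolding PP_def P_def by (rule summable_LIMSEQ[OF summable_P])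
  have lim_E: "E \<longlonglongrightarrow> 0"
    unfolding E_def by (rule weighted_error_sum_tendsto_zero) (use bound in \<open>simp add: err_def\<close>)
  have "Z - T M = (\<Sum>k. 1 / real (Suc (k + M)) ^ 2)" for M
    using suminf_split_initial_segment[OF summable_Z, of M] unfolding Z_def T_def by simp
  then have lim_tail: "(\<lambda>M. ln (real M) * (Z - T M)) \<longlonglongrightarrow> 0"
    using ln_times_tail_tendsto_zero by simp
  have lim_R: "R \<longlonglongrightarrow> B * Z - 2 * c * P + 0 - 2 * c * 0"
    unfolding R_def by (intro tendsto_intros lim_T lim_PP lim_E lim_tail)
  have "(\<lambda>M. harm (M ^ 2) - ln (real (M ^ 2))) \<longlonglongrightarrow> euler_mascheroni"
    using LIMSEQ_subseq_LIMSEQ[OF euler_mascheroni_LIMSEQ, of "\<lambda>M. M ^ 2"]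
    by (simp add: strict_mono_def power_strict_mono o_def)
  then have lim_harm: "(\<lambda>M. 2 * (c * Z - 1) * ln (real M) + R M) \<longlonglongrightarrow> euler_mascheroni"
    by (simp add: identity ln_realpow)
  have "2 * (c * Z - 1) = 0" by (rule ln_coefficient_zero[OF lim_harm lim_R])
  then have cZ: "c * Z = 1" by simp
  then have "R \<longlonglongrightarrow> euler_mascheroni" using lim_harm by simp
  then have gamma: "euler_mascheroni = B * Z - 2 * c * P" using lim_R LIMSEQ_unique by fastforce
  have c_eq: "c = 1 / Z" using cZ \<open>Z > 0\<close> by (simp add: field_simps)
  then show "c = 1 / zeta 2" unfolding zeta_2 .
  have "B = euler_mascheroni / Z + 2 * P / Z ^ 2"
    using gamma \<open>Z > 0\<close> unfolding c_eq by (simp add: field_simps power2_eq_square)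
  then show "B = euler_mascheroni / zeta 2 - 2 * deriv zeta 2 / zeta 2 ^ 2"
    unfolding zeta_2 deriv_zeta_2 by simp
qed

theorem mainTheorem9:
  assumes hyp: "\<forall>z::real. z \<ge> 1 \<longrightarrow>
     \<bar>(\<Sum>n\<in>{1..nat \<lfloor>z\<rfloor>}. real_of_int (moebius_mu n ^ 2)) - 6 / pi ^ 2 * z\<bar> \<le> 0.68 * sqrt z"
  shows "\<forall>z::real. z \<ge> 1 \<longrightarrow>
     \<bar>(\<Sum>n\<in>{1..nat \<lfloor>z\<rfloor>}. real_of_int (moebius_mu n ^ 2) / real n) - ln z / zeta 2
        - (euler_mascheroni / zeta 2 - 2 * deriv zeta 2 / (zeta 2) ^ 2)\<bar> \<le> 2.04 / sqrt z"
proof -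
  have count: "\<bar>partial_sum squarefree_indicator z - 6 / pi ^ 2 * z\<bar> \<le> 0.68 * sqrt z"
    if "z \<ge> 1" for z
    using hyp that unfolding partial_sum_def moebius_mu_squared[symmetric] by blast
  obtain B where B: "\<And>z. z \<ge> 1 \<Longrightarrow> \<bar>partial_sum (\<lambda>n. squarefree_indicator n / real n) z
      - 6 / pi ^ 2 * ln z - B\<bar> \<le> 3 * 0.68 / sqrt z"
    using logarithmic_sum_asymptotic[OF count] by blast
  note constants = squarefree_log_sum_constants[OF B]
  with B show ?thesis unfolding partial_sum_def moebius_mu_squared[symmetric] by simp
qed

end
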